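(* Let $(s_{1,1},\ldots,s_{1,m})=\mathcal{N}(\sigma_1,\ldots,\sigma_m)$ be a Nikishin system, ${\bf n}\in\mathbb{Z}_+^m$, $Q_{\bf n}$ a type II Hermite–Padé polynomial of $(\widehat{s}_{1,1},\ldots,\widehat{s}_{1,m})$ for ${\bf n}$ with associated polynomials $P_{{\bf n},j}$, and set $\Phi_{{\bf n},j}=Q_{\bf n}\widehat{s}_{1,j}-P_{{\bf n},j}$, $j=1,\ldots,m$. Define $\Psi_{{\bf n},0}=Q_{\bf n}$ and $\Psi_{{\bf n},k}(z)=\int\frac{\Psi_{{\bf n},k-1}(x)}{z-x}d\sigma_k(x)$, $k=1,\ldots,m$. Then $\Psi_{{\bf n},1}=\Phi_{{\bf n},1}$ and for $j=2,\ldots,m$ \[ \Psi_{{\bf n},j}(z)=\sum_{k=2}^j(-1)^k\widehat{s}_{j,k}(z)\Phi_{{\bf n},k-1}(z)+(-1)^{j+1}\Phi_{{\bf n},j}(z),\qquad z\in\mathbb{C}\setminus(\Delta_1\cup\Delta_j), \] and \[ \Phi_{{\bf n},j}(z)=\sum_{k=2}^j(-1)^k\widehat{s}_{k,j}(z)\Psi_{{\bf n},k-1}(z)+(-1)^{j+1}\Psi_{{\bf n},j}(z),\qquad z\in\mathbb{C}\setminus\bigcup_{k=1}^j\Delta_k. \]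
   Context: For a bounded interval $\Delta\subset\mathbb{R}$, $\mathcal{M}(\Delta)$ is the class of finite Borel measures of constant sign whose compact support consists of infinitely many points, is contained in $\mathbb{R}$, and has $\Delta$ as the smallest interval containing it. The Cauchy transform of a measure $s$ is $\widehat{s}(z)=\int\frac{ds(x)}{z-x}$. Nikishin system: bounded real intervals $\Delta_1,\ldots,\Delta_m$ with $\Delta_j\cap\Delta_{j+1}=\emptyset$ ($j=1,\ldots,m-1$), $\sigma_j\in\mathcal{M}(\Delta_j)$ with $\mathrm{Co}(\operatorname{supp}\sigma_j)=\Delta_j$. For $1\le j\le k\le m$: $s_{j,j}=\sigma_j$ and $ds_{j,k}(x)=\widehat{s}_{j+1,k}(x)\,d\sigma_j(x)$ for $j<k$; $\mathcal{N}(\sigma_1,\ldots,\sigma_m)=(s_{1,1},\ldots,s_{1,m})$. For $1\le k<j\le m$: $s_{j,k}=\langle\sigma_j,\sigma_{j-1},\ldots,\sigma_k\rangle$, defined recursively by $ds_{j,k}(x)=\widehat{s}_{j-1,k}(x)\,d\sigma_j(x)$. Type II Hermite–Padé polynomial for ${\bf n}$, $|{\bf n}|=n_1+\cdots+n_m$: a polynomial $Q_{\bf n}\not\equiv0$, $\deg Q_{\bf n}\le|{\bf n}|$, such that for some polynomials $P_{{\bf n},j}$, $Q_{\bf n}(z)\widehat{s}_{1,j}(z)-P_{{\bf n},j}(z)=\mathcal{O}(1/z^{n_j+1})$ as $z\to\infty$, $j=1,\ldots,m$. *)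

theory Defs
  imports "HOL-Analysis.Analysis" "HOL-Computational_Algebra.Polynomial" "HOL-Library.Landau_Symbols"
begin

definition msupp :: "real measure \<Rightarrow> real set" where
  "msupp M = {x. \<forall>e>0. emeasure M (ball x e) > 0}"

text \<open>Class M(Delta) for Delta = [a,b]: a finite positive Borel measure M, multiplied by a
  sign eps in {1,-1} (constant sign), with compact infinite support whose convex hull is [a,b].\<close>
definition in_class_M :: "real measure \<Rightarrow> real \<Rightarrow> real \<Rightarrow> real \<Rightarrow> bool" where
  "in_class_M M eps a b \<longleftrightarrow>
     sets M = sets borel \<and> finite_measure M \<and> eps \<in> {1, -1} \<and>
     compact (msupp M) \<and> infinite (msupp M) \<and> convex hull (msupp M) = {a..b}"

definition cauchy_tr :: "real measure \<Rightarrow> real \<Rightarrow> (real \<Rightarrow> complex) \<Rightarrow> complex \<Rightarrow> complex" where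
  "cauchy_tr M eps f z = complex_of_real eps * (\<integral>x. f x / (z - complex_of_real x) \<partial>M)"

text \<open>Cauchy transforms of s_{j,j+d} (upwards) and s_{j,j-d} (downwards); sigma_j = eps j * M j.\<close>
fun nik_up :: "(nat \<Rightarrow> real measure) \<Rightarrow> (nat \<Rightarrow> real) \<Rightarrow> nat \<Rightarrow> nat \<Rightarrow> complex \<Rightarrow> complex" where
  "nik_up M eps j 0 z = cauchy_tr (M j) (eps j) (\<lambda>_. 1) z"
| "nik_up M eps j (Suc d) z =
     cauchy_tr (M j) (eps j) (\<lambda>x. nik_up M eps (Suc j) d (complex_of_real x)) z"

fun nik_down :: "(nat \<Rightarrow> real measure) \<Rightarrow> (nat \<Rightarrow> real) \<Rightarrow> nat \<Rightarrow> nat \<Rightarrow> complex \<Rightarrow> complex" where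
  "nik_down M eps j 0 z = cauchy_tr (M j) (eps j) (\<lambda>_. 1) z"
| "nik_down M eps j (Suc d) z =
     cauchy_tr (M j) (eps j) (\<lambda>x. nik_down M eps (j - 1) d (complex_of_real x)) z"

text \<open>Cauchy transform of s_{j,k} (1-based indices).\<close>
definition s_hat :: "(nat \<Rightarrow> real measure) \<Rightarrow> (nat \<Rightarrow> real) \<Rightarrow> nat \<Rightarrow> nat \<Rightarrow> complex \<Rightarrow> complex" where
  "s_hat M eps j k z = (if j \<le> k then nik_up M eps j (k - j) z else nik_down M eps j (j - k) z)"

fun Psi :: "(nat \<Rightarrow> real measure) \<Rightarrow> (nat \<Rightarrow> real) \<Rightarrow> complex poly \<Rightarrow> nat \<Rightarrow> complex \<Rightarrow> complex" where
  "Psi M eps Q 0 z = poly Q z"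
| "Psi M eps Q (Suc k) z = cauchy_tr (M (Suc k)) (eps (Suc k)) (\<lambda>x. Psi M eps Q k (complex_of_real x)) z"

end

theory Submission
  imports Defs
begin

(*
  Write sigma_j = eps j * M j and ^h for the Cauchy transform of a measure h. Everything rests on
  Fubini's theorem for two measures with disjoint supports: for f on Delta_k and g on Delta_(k+1),
  the integral of f ^(g dsigma_(k+1)) dsigma_k is minus the integral of g ^(f dsigma_k) dsigma_(k+1).

  Since Q(z) ^s_(1,j)(z) - ^(Q ds_(1,j))(z) is a polynomial in z, the interpolation condition at
  infinity forces Phi_j = ^(Q ds_(1,j)) off Delta_1.

  For the second formula, let T_i = ^(Psi_(i-1) ds_(i,j)). Then T_1 = Phi_j, T_j = Psi_j, and the
  swap together with a partial fraction decomposition gives T_i = Psi_i ^s_(i+1,j) - T_(i+1),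
  so the formula is an alternating telescoping sum.

  For the first formula, integrate against sigma_i the product of (z - x), the iterated transform
  of Q(x)/(z - x) along sigma_1, ..., sigma_(i-1) and the iterated transform of 1/(z - x) along
  sigma_j, ..., sigma_(i+1). Moving the transforms to one side shows that this pairing is
  +-Psi_j(z) for i = 1 and +-Phi_j(z) for i = j, while consecutive pairings differ by
  +-^s_(j,i+1)(z) Phi_i(z); again the formula telescopes. Only consecutive intervals have to be
  disjoint, which is why z merely has to avoid Delta_1 and Delta_j.
*)

lemma minus_one_power_mult_eq_iff:
  fixes x y :: "'a::comm_ring_1"
  shows "(-1) ^ n * x = y \<longleftrightarrow> x = (-1) ^ n * y"
  by (metis left_minus_one_mult_self)

lemma alternating_telescope:
  fixes A c :: "nat \<Rightarrow> 'a::comm_ring_1"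
  assumes "p \<le> q" and step: "\<And>i. p \<le> i \<Longrightarrow> i < q \<Longrightarrow> A i = c (Suc i) - A (Suc i)"
  shows "(-1) ^ p * A p = (-1) ^ q * A q - (\<Sum>k=Suc p..q. (-1) ^ k * c k)"
  using assms(1)
proof (induction q rule: dec_induct)
  case (step n)
  then show ?case
    using assms(2)[of n] by (simp add: algebra_simps)
qed simp

lemma partial_fraction:
  fixes f u v :: "'a::field"
  assumes "u \<noteq> 0" "v \<noteq> 0" "u \<noteq> v"
  shows "f / u / v = 1 / (u - v) * (f / v - f / u)"
  using assms by (simp add: field_simps)

lemma poly_tendsto_0_imp_zero:
  fixes p :: "complex poly"
  assumes lim: "(poly p \<longlongrightarrow> 0) at_infinity"
  shows "p = 0"
proof (cases "degree p = 0")
  case True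
  then obtain c where c: "p = [:c:]" using degree_eq_zeroE by blast
  then have "poly p = (\<lambda>_. c)" by (simp add: fun_eq_iff)
  then have "((\<lambda>_. c) \<longlongrightarrow> 0) (at_infinity :: complex filter)" using lim by simp
  then have "c = 0" using tendsto_const_iff[OF trivial_limit_at_infinity] by blast
  then show ?thesis using c by simp
next
  case False
  then have "filterlim (poly p) at_infinity at_infinity" by (intro filterlim_poly_at_infinity) simp
  then show ?thesis
    using not_tendsto_and_filterlim_at_infinity[OF _ lim] trivial_limit_at_infinity by blast
qed

lemma bigo_tendsto_0:
  fixes f g :: "'a \<Rightarrow> 'b::real_normed_field"
  assumes "f \<in> O[F](g)" "(g \<longlongrightarrow> 0) F"
  shows "(f \<longlongrightarrow> 0) F"
proof -
  obtain c where "eventually (\<lambda>x. norm (f x) \<le> c * norm (g x)) F"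
    using assms(1) by (elim landau_o.bigE)
  moreover have "((\<lambda>x. c * norm (g x)) \<longlongrightarrow> 0) F"
    using tendsto_mult_right_zero[OF tendsto_norm_zero[OF assms(2)]] .
  ultimately show ?thesis by (rule Lim_null_comparison)
qed

lemma inverse_power_tendsto_0: "((\<lambda>z::complex. 1 / z ^ (n + 1)) \<longlongrightarrow> 0) at_infinity"
  using tendsto_power[OF tendsto_inverse_0, of "n + 1"] by (simp add: power_inverse divide_inverse)

section \<open>Bounded Borel functions\<close>

definition bounded_borel_on :: "(real \<Rightarrow> complex) \<Rightarrow> real set \<Rightarrow> bool" where
  "bounded_borel_on h K \<longleftrightarrow> h \<in> borel_measurable borel \<and> (\<exists>B. \<forall>x\<in>K. norm (h x) \<le> B)"

lemma bounded_borel_on_measurable: "bounded_borel_on h K \<Longrightarrow> h \<in> borel_measurable borel"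
  unfolding bounded_borel_on_def by blast

lemma bounded_borel_onE:
  assumes "bounded_borel_on h K"
  obtains B where "h \<in> borel_measurable borel" "\<And>x. x \<in> K \<Longrightarrow> norm (h x) \<le> B"
  using assms unfolding bounded_borel_on_def by blast

lemma bounded_borel_on_continuous:
  assumes "continuous_on UNIV h" "compact K"
  shows "bounded_borel_on h K"
proof -
  have "bounded (h ` K)"
    using compact_continuous_image[OF continuous_on_subset[OF assms(1)] assms(2)]
    by (simp add: compact_imp_bounded)
  then show ?thesis
    unfolding bounded_borel_on_def bounded_iff
    using borel_measurable_continuous_onI[OF assms(1)] by blast
qed

lemma borel_measurable_poly_of_real [measurable]:
  "(\<lambda>x. poly p (complex_of_real x)) \<in> borel_measurable borel"
  by (intro borel_measurable_continuous_onI continuous_intros)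

lemma bounded_borel_on_poly:
  "compact K \<Longrightarrow> bounded_borel_on (\<lambda>x. poly p (complex_of_real x)) K"
  by (intro bounded_borel_on_continuous continuous_intros)

lemma bounded_borel_on_const: "bounded_borel_on (\<lambda>_. c) K"
  unfolding bounded_borel_on_def by auto

lemma bounded_borel_on_mult:
  assumes "bounded_borel_on f K" "bounded_borel_on g K"
  shows "bounded_borel_on (\<lambda>x. f x * g x) K"
proof -
  obtain Bf Bg where f: "f \<in> borel_measurable borel" "\<And>x. x \<in> K \<Longrightarrow> norm (f x) \<le> Bf"
    and g: "g \<in> borel_measurable borel" "\<And>x. x \<in> K \<Longrightarrow> norm (g x) \<le> Bg"
    using assms by (metis bounded_borel_onE)
  have "norm (f x * g x) \<le> Bf * Bg" if "x \<in> K" for x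
    unfolding norm_mult using f(2) g(2) that by (intro mult_mono) (auto intro: order_trans[OF norm_ge_zero])
  moreover have "(\<lambda>x. f x * g x) \<in> borel_measurable borel" using f(1) g(1) by measurable
  ultimately show ?thesis unfolding bounded_borel_on_def by blast
qed

lemma separated_from_compact:
  assumes "compact K" "z \<notin> complex_of_real ` K"
  obtains d where "d > 0" "\<And>x. x \<in> K \<Longrightarrow> d \<le> norm (z - complex_of_real x)"
proof -
  have "compact (complex_of_real ` K)"
    by (rule compact_continuous_image[OF _ assms(1)]) (intro continuous_intros)
  then obtain d where "d > 0" "\<forall>w\<in>complex_of_real ` K. d \<le> dist z w"
    using separate_point_closed[OF compact_imp_closed assms(2)] by blast
  then show ?thesis using that by (auto simp: dist_norm)
qed

lemma bounded_borel_on_inverse_diff: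
  assumes "compact K" "z \<notin> complex_of_real ` K"
  shows "bounded_borel_on (\<lambda>x. 1 / (z - complex_of_real x)) K"
proof -
  obtain d where d: "d > 0" "\<And>x. x \<in> K \<Longrightarrow> d \<le> norm (z - complex_of_real x)"
    using separated_from_compact[OF assms] by blast
  then have "\<forall>x\<in>K. norm (1 / (z - complex_of_real x)) \<le> 1 / d"
    by (auto simp: norm_divide intro!: frac_le)
  then show ?thesis unfolding bounded_borel_on_def by (intro conjI exI) measurable
qed

lemma bounded_borel_on_divide_diff:
  assumes "bounded_borel_on f K" "compact K" "z \<notin> complex_of_real ` K"
  shows "bounded_borel_on (\<lambda>x. f x / (z - complex_of_real x)) K"
  using bounded_borel_on_mult[OF assms(1) bounded_borel_on_inverse_diff[OF assms(2,3)]] by simp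

section \<open>Finite measures concentrated on a compact set\<close>

lemma AE_in_msupp:
  assumes sets: "sets M = sets (borel :: real measure)"
  shows "AE x in M. x \<in> msupp M"
proof -
  define F where "F = {ball x e | x e. e > 0 \<and> emeasure M (ball x e) = 0}"
  obtain F' where F': "F' \<subseteq> F" "countable F'" "\<Union>F' = \<Union>F"
    using Lindelof[of F] unfolding F_def by blast
  have "\<Union>F' \<in> null_sets M"
  proof -
    have "S \<in> null_sets M" if "S \<in> F'" for S
      using that F'(1) sets unfolding F_def null_sets_def by auto
    then show ?thesis
      using null_sets_UN'[OF F'(2), of id] by simp
  qed
  moreover have "{x \<in> space M. x \<notin> msupp M} \<subseteq> \<Union>F'"
  proof
    fix x assume "x \<in> {x \<in> space M. x \<notin> msupp M}"
    then obtain e where "e > 0" "emeasure M (ball x e) = 0"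
      unfolding msupp_def by (auto simp: not_less)
    then have "x \<in> \<Union>F" unfolding F_def by force
    then show "x \<in> \<Union>F'" using F'(3) by simp
  qed
  ultimately show ?thesis by (rule AE_I')
qed

locale concentrated_measure =
  fixes M :: "real measure" and K :: "real set"
  assumes finite: "finite_measure M" and sets_eq_borel: "sets M = sets borel"
    and AE_in: "AE x in M. x \<in> K" and compact: "compact K"

lemma in_class_M_concentrated:
  assumes "in_class_M M e a b"
  shows "concentrated_measure M {a..b}"
proof (rule concentrated_measure.intro)
  show "finite_measure M" "sets M = sets borel"
    using assms unfolding in_class_M_def by auto
  have "msupp M \<subseteq> {a..b}"
    using assms hull_subset[of "msupp M" convex] unfolding in_class_M_def by auto
  then show "AE x in M. x \<in> {a..b}"
    using AE_in_msupp[OF \<open>sets M = sets borel\<close>] by (auto elim!: eventually_mono)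
qed simp

definition sigma_integral :: "real measure \<Rightarrow> real \<Rightarrow> (real \<Rightarrow> complex) \<Rightarrow> complex" where
  "sigma_integral M e f = complex_of_real e * (\<integral>x. f x \<partial>M)"

lemma cauchy_tr_eq_sigma_integral:
  "cauchy_tr M e h z = sigma_integral M e (\<lambda>x. h x / (z - complex_of_real x))"
  unfolding cauchy_tr_def sigma_integral_def ..

lemma sigma_integral_cmult: "sigma_integral M e (\<lambda>x. c * f x) = c * sigma_integral M e f"
  unfolding sigma_integral_def by simp

context concentrated_measure
begin

lemma borel_measurable_M: "h \<in> borel_measurable borel \<Longrightarrow> h \<in> borel_measurable M"
  by (simp add: measurable_cong_sets[OF sets_eq_borel refl])

lemma AE_supportI:
  assumes "\<And>x. x \<in> K \<Longrightarrow> P x"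
  shows "AE x in M. P x"
  using AE_in by (rule eventually_mono) (rule assms)

lemma integrable_bounded_borel:
  assumes "bounded_borel_on h K"
  shows "integrable M h"
proof -
  obtain B where "h \<in> borel_measurable borel" "\<And>x. x \<in> K \<Longrightarrow> norm (h x) \<le> B"
    using assms bounded_borel_onE by blast
  then show ?thesis
    by (intro finite_measure.integrable_const_bound[OF finite, of h B] AE_supportI borel_measurable_M)
qed

lemma norm_integral_le:
  fixes h :: "real \<Rightarrow> complex"
  assumes h: "h \<in> borel_measurable borel" and B: "\<And>x. x \<in> K \<Longrightarrow> norm (h x) \<le> B"
  shows "norm (\<integral>x. h x \<partial>M) \<le> B * measure M (space M)"
proof -
  have "integrable M h"
    using h B by (intro integrable_bounded_borel) (auto simp: bounded_borel_on_def)
  have "norm (\<integral>x. h x \<partial>M) \<le> (\<integral>x. norm (h x) \<partial>M)" by (rule integral_norm_bound)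
  also have "\<dots> \<le> (\<integral>x. B \<partial>M)"
    using \<open>integrable M h\<close> finite_measure.integrable_const[OF finite]
    by (intro integral_mono_AE AE_supportI B) auto
  also have "\<dots> = B * measure M (space M)" by simp
  finally show ?thesis .
qed

lemma sigma_integral_cong:
  assumes "f \<in> borel_measurable borel" "g \<in> borel_measurable borel" "\<And>x. x \<in> K \<Longrightarrow> f x = g x"
  shows "sigma_integral M e f = sigma_integral M e g"
  unfolding sigma_integral_def
  using assms by (simp add: borel_measurable_M AE_supportI integral_cong_AE)

lemma sigma_integral_add:
  assumes "bounded_borel_on f K" "bounded_borel_on g K"
  shows "sigma_integral M e (\<lambda>x. f x + g x) = sigma_integral M e f + sigma_integral M e g"
  unfolding sigma_integral_def
  using assms by (simp add: integrable_bounded_borel algebra_simps)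

lemma sigma_integral_diff:
  assumes "bounded_borel_on f K" "bounded_borel_on g K"
  shows "sigma_integral M e (\<lambda>x. f x - g x) = sigma_integral M e f - sigma_integral M e g"
  unfolding sigma_integral_def
  using assms by (simp add: integrable_bounded_borel algebra_simps)

lemma norm_cauchy_tr_le:
  assumes h: "h \<in> borel_measurable borel" and B: "\<And>x. x \<in> K \<Longrightarrow> norm (h x) \<le> B"
    and d: "d > 0" "\<And>x. x \<in> K \<Longrightarrow> d \<le> norm (z - complex_of_real x)"
  shows "norm (cauchy_tr M e h z) \<le> \<bar>e\<bar> * (B / d * measure M (space M))"
proof -
  have "norm (h x / (z - complex_of_real x)) \<le> B / d" if "x \<in> K" for x
    unfolding norm_divide using B[OF that] d that
    by (intro frac_le) (auto intro: order_trans[OF norm_ge_zero])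
  then have "norm (\<integral>x. h x / (z - complex_of_real x) \<partial>M) \<le> B / d * measure M (space M)"
    using h by (intro norm_integral_le) auto
  then show ?thesis
    unfolding cauchy_tr_def norm_mult norm_of_real by (rule mult_left_mono) simp
qed

lemma eventually_far_from_support:
  obtains R where "eventually (\<lambda>z. 0 < norm z - R \<and> (\<forall>x\<in>K. norm z - R \<le> norm (z - complex_of_real x))) at_infinity"
proof -
  obtain R where R: "\<And>x. x \<in> K \<Longrightarrow> norm x \<le> R"
    using compact_imp_bounded[OF compact] bounded_iff by metis
  have "norm z - R \<le> norm (z - complex_of_real x)" if "x \<in> K" for z x
    using norm_triangle_ineq2[of z "complex_of_real x"] R[OF that] by simp
  then have "eventually (\<lambda>z. 0 < norm z - R \<and> (\<forall>x\<in>K. norm z - R \<le> norm (z - complex_of_real x))) at_infinity"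
    unfolding eventually_at_infinity by (intro exI[of _ "R + 1"]) auto
  then show ?thesis using that by blast
qed

lemma eventually_notin_support: "eventually (\<lambda>z. z \<notin> complex_of_real ` K) at_infinity"
proof -
  obtain R where "eventually (\<lambda>z. 0 < norm z - R \<and> (\<forall>x\<in>K. norm z - R \<le> norm (z - complex_of_real x))) at_infinity"
    by (rule eventually_far_from_support)
  then show ?thesis by (rule eventually_mono) force
qed

lemma cauchy_tr_tendsto_0:
  assumes "bounded_borel_on h K"
  shows "(cauchy_tr M e h \<longlongrightarrow> 0) at_infinity"
proof -
  obtain B where h: "h \<in> borel_measurable borel" and B: "\<And>x. x \<in> K \<Longrightarrow> norm (h x) \<le> B"
    using assms bounded_borel_onE by blast
  obtain R where far: "eventually (\<lambda>z. 0 < norm z - R \<and> (\<forall>x\<in>K. norm z - R \<le> norm (z - complex_of_real x))) at_infinity"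
    by (rule eventually_far_from_support)
  define c where "c = \<bar>e\<bar> * B * measure M (space M)"
  have "eventually (\<lambda>z. norm (cauchy_tr M e h z) \<le> c / (norm z - R)) at_infinity"
  proof (rule eventually_mono[OF far])
    fix z :: complex
    assume "0 < norm z - R \<and> (\<forall>x\<in>K. norm z - R \<le> norm (z - complex_of_real x))"
    then show "norm (cauchy_tr M e h z) \<le> c / (norm z - R)"
      using norm_cauchy_tr_le[OF h B, of "norm z - R" z e] unfolding c_def by auto
  qed
  moreover have "((\<lambda>z::complex. c / (norm z - R)) \<longlongrightarrow> 0) at_infinity"
    by (intro tendsto_divide_0[OF tendsto_const] filterlim_at_top_imp_at_infinity
        filterlim_tendsto_add_at_top[OF tendsto_const filterlim_norm_at_top, of "-R", simplified])
  ultimately show ?thesis by (rule Lim_null_comparison)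
qed

lemma borel_measurable_cauchy_tr:
  assumes "h \<in> borel_measurable borel"
  shows "(\<lambda>y. cauchy_tr M e h (complex_of_real y)) \<in> borel_measurable borel"
proof -
  interpret finite_measure M by (rule finite)
  have "(\<lambda>(y, x). h x / (complex_of_real y - complex_of_real x)) \<in> borel_measurable (borel \<Otimes>\<^sub>M borel)"
    using assms by measurable
  then have "(\<lambda>(y, x). h x / (complex_of_real y - complex_of_real x)) \<in> borel_measurable (borel \<Otimes>\<^sub>M M)"
    by (simp add: measurable_cong_sets[OF sets_pair_measure_cong[OF refl sets_eq_borel] refl])
  then have "(\<lambda>y. \<integral>x. h x / (complex_of_real y - complex_of_real x) \<partial>M) \<in> borel_measurable borel"
    by (rule borel_measurable_lebesgue_integral)
  then show ?thesis unfolding cauchy_tr_def by measurable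
qed

lemma bounded_borel_on_cauchy_tr:
  assumes "bounded_borel_on h K" "compact J" "J \<inter> K = {}"
  shows "bounded_borel_on (\<lambda>y. cauchy_tr M e h (complex_of_real y)) J"
proof -
  obtain B where h: "h \<in> borel_measurable borel" and B: "\<And>x. x \<in> K \<Longrightarrow> norm (h x) \<le> B"
    using assms(1) bounded_borel_onE by blast
  obtain d where d: "d > 0" "\<forall>y\<in>J. \<forall>x\<in>K. d \<le> dist y x"
    using separate_compact_closed[OF assms(2) compact_imp_closed[OF compact] assms(3)] by blast
  have "norm (cauchy_tr M e h (complex_of_real y)) \<le> \<bar>e\<bar> * (B / d * measure M (space M))"
    if "y \<in> J" for y
    using d that by (intro norm_cauchy_tr_le[OF h B]) (auto simp: dist_real_def simp flip: of_real_diff)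
  then show ?thesis
    unfolding bounded_borel_on_def using borel_measurable_cauchy_tr[OF h] by blast
qed

lemma cauchy_tr_mult_diff:
  assumes f: "bounded_borel_on f K" and y: "y \<notin> K"
  shows "cauchy_tr M e (\<lambda>x. f x * (z - complex_of_real x)) (complex_of_real y)
       = (z - complex_of_real y) * cauchy_tr M e f (complex_of_real y) + sigma_integral M e f"
proof -
  have y': "complex_of_real y \<notin> complex_of_real ` K" using y by auto
  define r where "r x = 1 / (complex_of_real y - complex_of_real x)" for x
  have r: "bounded_borel_on r K"
    unfolding r_def by (rule bounded_borel_on_inverse_diff[OF compact y'])
  have "cauchy_tr M e (\<lambda>x. f x * (z - complex_of_real x)) (complex_of_real y)
      = sigma_integral M e (\<lambda>x. (z - complex_of_real y) * (f x * r x) + f x)"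
    unfolding cauchy_tr_eq_sigma_integral
  proof (rule sigma_integral_cong)
    show "(\<lambda>x. f x * (z - complex_of_real x) / (complex_of_real y - complex_of_real x)) \<in> borel_measurable borel"
      "(\<lambda>x. (z - complex_of_real y) * (f x * r x) + f x) \<in> borel_measurable borel"
      using f r by (auto simp: bounded_borel_on_def r_def)
    fix x assume "x \<in> K"
    then have "complex_of_real y - complex_of_real x \<noteq> 0" using y by auto
    then show "f x * (z - complex_of_real x) / (complex_of_real y - complex_of_real x)
        = (z - complex_of_real y) * (f x * r x) + f x"
      unfolding r_def by (simp add: field_simps)
  qed
  also have "\<dots> = (z - complex_of_real y) * sigma_integral M e (\<lambda>x. f x * r x) + sigma_integral M e f"
    using f r
    by (simp add: sigma_integral_add bounded_borel_on_mult bounded_borel_on_const sigma_integral_cmult)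
  finally show ?thesis
    by (simp add: cauchy_tr_eq_sigma_integral r_def)
qed

lemma cauchy_tr_divide_diff:
  assumes f: "bounded_borel_on f K" and y: "y \<notin> K" and z: "z \<notin> complex_of_real ` K"
    and zy: "z \<noteq> complex_of_real y"
  shows "cauchy_tr M e (\<lambda>x. f x / (z - complex_of_real x)) (complex_of_real y)
       = (cauchy_tr M e f (complex_of_real y) - cauchy_tr M e f z) / (z - complex_of_real y)"
proof -
  have y': "complex_of_real y \<notin> complex_of_real ` K" using y by auto
  define r where "r w x = 1 / (w - complex_of_real x)" for w x
  have r: "bounded_borel_on (r w) K" if "w \<notin> complex_of_real ` K" for w
    unfolding r_def by (rule bounded_borel_on_inverse_diff[OF compact that])
  have "cauchy_tr M e (\<lambda>x. f x / (z - complex_of_real x)) (complex_of_real y)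
      = sigma_integral M e (\<lambda>x. 1 / (z - complex_of_real y) * (f x * r (complex_of_real y) x - f x * r z x))"
    unfolding cauchy_tr_eq_sigma_integral
  proof (rule sigma_integral_cong)
    show "(\<lambda>x. f x / (z - complex_of_real x) / (complex_of_real y - complex_of_real x)) \<in> borel_measurable borel"
      "(\<lambda>x. 1 / (z - complex_of_real y) * (f x * r (complex_of_real y) x - f x * r z x)) \<in> borel_measurable borel"
      using f by (auto simp: bounded_borel_on_def r_def)
    fix x assume "x \<in> K"
    then have "z - complex_of_real x \<noteq> 0" "complex_of_real y - complex_of_real x \<noteq> 0"
      using y z by auto
    then show "f x / (z - complex_of_real x) / (complex_of_real y - complex_of_real x)
        = 1 / (z - complex_of_real y) * (f x * r (complex_of_real y) x - f x * r z x)"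
      using partial_fraction[of "z - complex_of_real x" "complex_of_real y - complex_of_real x" "f x"] zy
      unfolding r_def by simp
  qed
  also have "\<dots> = 1 / (z - complex_of_real y)
      * (sigma_integral M e (\<lambda>x. f x * r (complex_of_real y) x) - sigma_integral M e (\<lambda>x. f x * r z x))"
    by (simp only: sigma_integral_cmult
        sigma_integral_diff[OF bounded_borel_on_mult[OF f r[OF y']] bounded_borel_on_mult[OF f r[OF z]]])
  finally show ?thesis
    by (simp add: cauchy_tr_eq_sigma_integral r_def)
qed

lemma difference_quotient_integral_pCons:
  assumes g: "bounded_borel_on g K" and z: "z \<notin> complex_of_real ` K"
  shows "sigma_integral M e (\<lambda>x. (poly (pCons c R) z - poly (pCons c R) (complex_of_real x))
           / (z - complex_of_real x) * g x)
       = z * sigma_integral M e (\<lambda>x. (poly R z - poly R (complex_of_real x)) / (z - complex_of_real x) * g x)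
         + sigma_integral M e (\<lambda>x. poly R (complex_of_real x) * g x)"
proof -
  note g_meas[measurable] = bounded_borel_on_measurable[OF g]
  define D where "D = (\<lambda>x. (poly R z - poly R (complex_of_real x)) / (z - complex_of_real x) * g x)"
  have "D = (\<lambda>x. (poly R z - poly R (complex_of_real x)) * (1 / (z - complex_of_real x)) * g x)"
    by (simp add: D_def fun_eq_iff)
  then have D: "bounded_borel_on D K"
    by (simp only:) (intro bounded_borel_on_mult bounded_borel_on_inverse_diff[OF compact z] g
        bounded_borel_on_continuous compact continuous_intros)
  have Rg: "bounded_borel_on (\<lambda>x. poly R (complex_of_real x) * g x) K"
    by (intro bounded_borel_on_mult bounded_borel_on_poly compact g)
  have "sigma_integral M e (\<lambda>x. (poly (pCons c R) z - poly (pCons c R) (complex_of_real x))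
        / (z - complex_of_real x) * g x)
      = sigma_integral M e (\<lambda>x. z * D x + poly R (complex_of_real x) * g x)"
  proof (rule sigma_integral_cong)
    show "(\<lambda>x. (poly (pCons c R) z - poly (pCons c R) (complex_of_real x)) / (z - complex_of_real x) * g x)
        \<in> borel_measurable borel"
      by measurable
    show "(\<lambda>x. z * D x + poly R (complex_of_real x) * g x) \<in> borel_measurable borel"
      unfolding D_def by measurable
    fix x assume "x \<in> K"
    then have "z - complex_of_real x \<noteq> 0" using z by auto
    then show "(poly (pCons c R) z - poly (pCons c R) (complex_of_real x)) / (z - complex_of_real x) * g x
        = z * D x + poly R (complex_of_real x) * g x"
      unfolding D_def by (simp add: field_simps)
  qed
  also have "\<dots> = z * sigma_integral M e D + sigma_integral M e (\<lambda>x. poly R (complex_of_real x) * g x)"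
    by (simp only: sigma_integral_add[OF bounded_borel_on_mult[OF bounded_borel_on_const D] Rg]
        sigma_integral_cmult)
  finally show ?thesis unfolding D_def .
qed

lemma difference_quotient_integral_is_poly:
  assumes g: "bounded_borel_on g K"
  shows "\<exists>p. \<forall>z. z \<notin> complex_of_real ` K \<longrightarrow>
     sigma_integral M e (\<lambda>x. (poly Q z - poly Q (complex_of_real x)) / (z - complex_of_real x) * g x) = poly p z"
proof (induction Q)
  case 0
  show ?case by (intro exI[of _ 0]) (simp add: sigma_integral_def)
next
  case (pCons c R)
  then obtain p where "\<And>z. z \<notin> complex_of_real ` K \<Longrightarrow>
     sigma_integral M e (\<lambda>x. (poly R z - poly R (complex_of_real x)) / (z - complex_of_real x) * g x) = poly p z"
    by blast
  then show ?case
    using difference_quotient_integral_pCons[OF g]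
    by (intro exI[of _ "pCons (sigma_integral M e (\<lambda>x. poly R (complex_of_real x) * g x)) p"])
      (simp add: algebra_simps)
qed

lemma cauchy_tr_remainder:
  assumes g: "bounded_borel_on g K"
    and lim: "((\<lambda>z. poly Q z * cauchy_tr M e g z - poly P z) \<longlongrightarrow> 0) at_infinity"
    and z: "z \<notin> complex_of_real ` K"
  shows "poly Q z * cauchy_tr M e g z - poly P z = cauchy_tr M e (\<lambda>x. poly Q (complex_of_real x) * g x) z"
proof -
  obtain p where p: "\<And>w. w \<notin> complex_of_real ` K \<Longrightarrow>
     sigma_integral M e (\<lambda>x. (poly Q w - poly Q (complex_of_real x)) / (w - complex_of_real x) * g x) = poly p w"
    using difference_quotient_integral_is_poly[OF g] by blast
  have Qg: "bounded_borel_on (\<lambda>x. poly Q (complex_of_real x) * g x) K"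
    by (intro bounded_borel_on_mult bounded_borel_on_poly compact g)
  have poly_p: "poly Q w * cauchy_tr M e g w - cauchy_tr M e (\<lambda>x. poly Q (complex_of_real x) * g x) w = poly p w"
    if w: "w \<notin> complex_of_real ` K" for w
  proof -
    have gw: "bounded_borel_on (\<lambda>x. poly Q w * (g x / (w - complex_of_real x))) K"
      and Qgw: "bounded_borel_on (\<lambda>x. poly Q (complex_of_real x) * g x / (w - complex_of_real x)) K"
      by (intro bounded_borel_on_mult bounded_borel_on_const bounded_borel_on_divide_diff g Qg compact w)+
    have "poly Q w * cauchy_tr M e g w - cauchy_tr M e (\<lambda>x. poly Q (complex_of_real x) * g x) w
        = sigma_integral M e (\<lambda>x. poly Q w * (g x / (w - complex_of_real x))
            - poly Q (complex_of_real x) * g x / (w - complex_of_real x))"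
      by (simp only: sigma_integral_diff[OF gw Qgw] sigma_integral_cmult cauchy_tr_eq_sigma_integral)
    also have "\<dots> = sigma_integral M e
        (\<lambda>x. (poly Q w - poly Q (complex_of_real x)) / (w - complex_of_real x) * g x)"
      by (simp add: diff_divide_distrib algebra_simps)
    finally show ?thesis using p[OF w] by simp
  qed
  have "((\<lambda>w. (poly Q w * cauchy_tr M e g w - poly P w)
      - cauchy_tr M e (\<lambda>x. poly Q (complex_of_real x) * g x) w) \<longlongrightarrow> 0) at_infinity"
    using tendsto_diff[OF lim cauchy_tr_tendsto_0[OF Qg]] by simp
  moreover have "eventually (\<lambda>w. (poly Q w * cauchy_tr M e g w - poly P w)
      - cauchy_tr M e (\<lambda>x. poly Q (complex_of_real x) * g x) w = poly (p - P) w) at_infinity"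
    using eventually_notin_support by (rule eventually_mono) (simp add: poly_p[symmetric])
  ultimately have "(poly (p - P) \<longlongrightarrow> 0) at_infinity"
    by (rule Lim_transform_eventually)
    then have "p - P = 0" by (rule poly_tendsto_0_imp_zero)
  then show ?thesis using poly_p[OF z] by (simp add: algebra_simps)
qed

end

section \<open>Two measures with disjoint supports\<close>

lemma integrable_pair_divide_diff:
  assumes A: "concentrated_measure M1 K1" and B: "concentrated_measure M2 K2" and disj: "K1 \<inter> K2 = {}"
    and f: "bounded_borel_on f K1" and g: "bounded_borel_on g K2"
  shows "integrable (M1 \<Otimes>\<^sub>M M2) (\<lambda>(x, y). f x * g y / (complex_of_real x - complex_of_real y))"
proof -
  interpret A: concentrated_measure M1 K1 by (rule A)
  interpret B: concentrated_measure M2 K2 by (rule B)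
  interpret M1: finite_measure M1 by (rule A.finite)
  interpret M2: finite_measure M2 by (rule B.finite)
  interpret P: pair_sigma_finite M1 M2 ..
  obtain Bf Bg where f_meas[measurable]: "f \<in> borel_measurable borel" and Bf: "\<And>x. x \<in> K1 \<Longrightarrow> norm (f x) \<le> Bf"
    and g_meas[measurable]: "g \<in> borel_measurable borel" and Bg: "\<And>y. y \<in> K2 \<Longrightarrow> norm (g y) \<le> Bg"
    using f g bounded_borel_onE by metis
  obtain d where d: "d > 0" "\<And>x y. x \<in> K1 \<Longrightarrow> y \<in> K2 \<Longrightarrow> d \<le> dist x y"
    using separate_compact_closed[OF A.compact compact_imp_closed[OF B.compact] disj] by blast
  have bound: "norm (f x * g y / (complex_of_real x - complex_of_real y)) \<le> Bf * Bg / d"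
    if "x \<in> K1" "y \<in> K2" for x y
  proof -
    have "d \<le> norm (complex_of_real x - complex_of_real y)"
      using d(2)[OF that] by (simp add: dist_real_def flip: of_real_diff)
    moreover have "0 \<le> Bf" "0 \<le> Bg"
      using Bf[OF that(1)] Bg[OF that(2)] by (auto intro: order_trans[OF norm_ge_zero])
    ultimately show ?thesis
      unfolding norm_divide norm_mult using Bf[OF that(1)] Bg[OF that(2)] d(1)
      by (intro frac_le mult_mono mult_nonneg_nonneg) auto
  qed
  have "K1 \<in> sets M1" "K2 \<in> sets M2"
    using A.sets_eq_borel B.sets_eq_borel A.compact B.compact by (auto intro: borel_closed compact_imp_closed)
  then have "AE p in M1 \<Otimes>\<^sub>M M2. fst p \<in> K1 \<and> snd p \<in> K2"
    using A.AE_in B.AE_in by (intro P.AE_pair_measure) (measurable, auto elim: eventually_mono)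
  then have "AE p in M1 \<Otimes>\<^sub>M M2. norm ((\<lambda>(x, y). f x * g y / (complex_of_real x - complex_of_real y)) p) \<le> Bf * Bg / d"
    by (rule eventually_mono) (auto intro: bound)
  moreover have "(\<lambda>(x, y). f x * g y / (complex_of_real x - complex_of_real y)) \<in> borel_measurable (borel \<Otimes>\<^sub>M borel)"
    by measurable
  then have "(\<lambda>(x, y). f x * g y / (complex_of_real x - complex_of_real y)) \<in> borel_measurable (M1 \<Otimes>\<^sub>M M2)"
    by (simp add: measurable_cong_sets[OF sets_pair_measure_cong[OF A.sets_eq_borel B.sets_eq_borel] refl])
  ultimately show ?thesis
    using finite_measure.integrable_const_bound[OF finite_measure_pair_measure[OF B.finite A.finite]] by blast
qed

lemma sigma_integral_mult_cauchy_tr_swap: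
  assumes A: "concentrated_measure M1 K1" and B: "concentrated_measure M2 K2" and disj: "K1 \<inter> K2 = {}"
    and f: "bounded_borel_on f K1" and g: "bounded_borel_on g K2"
  shows "sigma_integral M1 e1 (\<lambda>x. f x * cauchy_tr M2 e2 g (complex_of_real x))
       = - sigma_integral M2 e2 (\<lambda>y. g y * cauchy_tr M1 e1 f (complex_of_real y))"
proof -
  interpret M1: finite_measure M1 using A by (rule concentrated_measure.finite)
  interpret M2: finite_measure M2 using B by (rule concentrated_measure.finite)
  interpret P: pair_sigma_finite M1 M2 ..
  define F where "F x y = f x * g y / (complex_of_real x - complex_of_real y)" for x y
  have "sigma_integral M1 e1 (\<lambda>x. f x * cauchy_tr M2 e2 g (complex_of_real x))
      = complex_of_real e1 * complex_of_real e2 * (\<integral>x. (\<integral>y. F x y \<partial>M2) \<partial>M1)"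
    unfolding sigma_integral_def cauchy_tr_def F_def times_divide_eq_right[symmetric] integral_mult_right_zero
    by (simp add: mult_ac)
  also have "(\<integral>x. (\<integral>y. F x y \<partial>M2) \<partial>M1) = (\<integral>y. (\<integral>x. F x y \<partial>M1) \<partial>M2)"
    using integrable_pair_divide_diff[OF assms] unfolding F_def
    by (rule P.Fubini_integral[symmetric])
  also have "complex_of_real e1 * complex_of_real e2 * (\<integral>y. (\<integral>x. F x y \<partial>M1) \<partial>M2)
      = - sigma_integral M2 e2 (\<lambda>y. g y * cauchy_tr M1 e1 f (complex_of_real y))"
  proof -
    have "(\<lambda>x. F x y) = (\<lambda>x. - (g y * (f x / (complex_of_real y - complex_of_real x))))" for y
      unfolding F_def by (simp add: fun_eq_iff divide_minus_right[symmetric])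
    then have "(\<integral>x. F x y \<partial>M1) = - (g y * (\<integral>x. f x / (complex_of_real y - complex_of_real x) \<partial>M1))" for y
      by (simp only: integral_minus integral_mult_right_zero)
    then show ?thesis
      unfolding sigma_integral_def cauchy_tr_def by (simp add: mult_ac)
  qed
  finally show ?thesis .
qed

lemma cauchy_tr_mult_cauchy_tr:
  assumes A: "concentrated_measure M1 K1" and B: "concentrated_measure M2 K2" and disj: "K1 \<inter> K2 = {}"
    and f: "bounded_borel_on f K1" and g: "bounded_borel_on g K2"
    and z1: "z \<notin> complex_of_real ` K1" and z2: "z \<notin> complex_of_real ` K2"
  shows "cauchy_tr M1 e1 (\<lambda>x. f x * cauchy_tr M2 e2 g (complex_of_real x)) z
       = cauchy_tr M1 e1 f z * cauchy_tr M2 e2 g z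
         - cauchy_tr M2 e2 (\<lambda>y. g y * cauchy_tr M1 e1 f (complex_of_real y)) z"
proof -
  interpret A: concentrated_measure M1 K1 by (rule A)
  interpret B: concentrated_measure M2 K2 by (rule B)
  define f\<^sub>z where "f\<^sub>z x = f x / (z - complex_of_real x)" for x
  define F where "F y = cauchy_tr M1 e1 f (complex_of_real y)" for y
  have fz: "bounded_borel_on f\<^sub>z K1"
    unfolding f\<^sub>z_def by (rule bounded_borel_on_divide_diff[OF f A.compact z1])
  have F: "bounded_borel_on F K2"
    unfolding F_def by (rule A.bounded_borel_on_cauchy_tr[OF f B.compact]) (use disj in blast)
  have g_div: "bounded_borel_on (\<lambda>y. h y / (z - complex_of_real y)) K2" if "bounded_borel_on h K2" for h
    by (rule bounded_borel_on_divide_diff[OF that B.compact z2])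
  have "cauchy_tr M1 e1 (\<lambda>x. f x * cauchy_tr M2 e2 g (complex_of_real x)) z
      = sigma_integral M1 e1 (\<lambda>x. f\<^sub>z x * cauchy_tr M2 e2 g (complex_of_real x))"
    by (simp add: cauchy_tr_eq_sigma_integral f\<^sub>z_def)
  also have "\<dots> = - sigma_integral M2 e2 (\<lambda>y. g y * cauchy_tr M1 e1 f\<^sub>z (complex_of_real y))"
    by (rule sigma_integral_mult_cauchy_tr_swap[OF A B disj fz g])
  also have "sigma_integral M2 e2 (\<lambda>y. g y * cauchy_tr M1 e1 f\<^sub>z (complex_of_real y))
      = sigma_integral M2 e2 (\<lambda>y. g y * F y / (z - complex_of_real y)
          - cauchy_tr M1 e1 f z * (g y / (z - complex_of_real y)))"
  proof (rule B.sigma_integral_cong)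
    show "(\<lambda>y. g y * cauchy_tr M1 e1 f\<^sub>z (complex_of_real y)) \<in> borel_measurable borel"
      using g fz by (auto simp: bounded_borel_on_def intro!: borel_measurable_times A.borel_measurable_cauchy_tr)
    show "(\<lambda>y. g y * F y / (z - complex_of_real y) - cauchy_tr M1 e1 f z * (g y / (z - complex_of_real y)))
        \<in> borel_measurable borel"
      using bounded_borel_on_measurable[OF g] bounded_borel_on_measurable[OF F] by measurable
    fix y assume y: "y \<in> K2"
    then have "y \<notin> K1" "z \<noteq> complex_of_real y" using disj z2 by auto
    then show "g y * cauchy_tr M1 e1 f\<^sub>z (complex_of_real y)
        = g y * F y / (z - complex_of_real y) - cauchy_tr M1 e1 f z * (g y / (z - complex_of_real y))"
      unfolding f\<^sub>z_def F_def A.cauchy_tr_divide_diff[OF f \<open>y \<notin> K1\<close> z1 \<open>z \<noteq> complex_of_real y\<close>]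
      by (simp add: diff_divide_distrib algebra_simps)
  qed
  also have "\<dots> = sigma_integral M2 e2 (\<lambda>y. g y * F y / (z - complex_of_real y))
      - cauchy_tr M1 e1 f z * sigma_integral M2 e2 (\<lambda>y. g y / (z - complex_of_real y))"
    by (simp only: B.sigma_integral_diff[OF g_div[OF bounded_borel_on_mult[OF g F]]
          bounded_borel_on_mult[OF bounded_borel_on_const g_div[OF g]]] sigma_integral_cmult)
  finally show ?thesis
    by (simp add: cauchy_tr_eq_sigma_integral F_def)
qed

lemma sigma_integral_linear_mult_cauchy_tr:
  assumes A: "concentrated_measure M1 K1" and B: "concentrated_measure M2 K2" and disj: "K1 \<inter> K2 = {}"
    and f: "bounded_borel_on f K1" and g: "bounded_borel_on g K2"
  shows "sigma_integral M1 e1 (\<lambda>x. f x * (z - complex_of_real x) * cauchy_tr M2 e2 g (complex_of_real x))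
       = - (sigma_integral M1 e1 f * sigma_integral M2 e2 g)
         - sigma_integral M2 e2 (\<lambda>y. cauchy_tr M1 e1 f (complex_of_real y) * (z - complex_of_real y) * g y)"
proof -
  interpret A: concentrated_measure M1 K1 by (rule A)
  interpret B: concentrated_measure M2 K2 by (rule B)
  define f\<^sub>z where "f\<^sub>z x = f x * (z - complex_of_real x)" for x
  define F where "F y = cauchy_tr M1 e1 f (complex_of_real y)" for y
  have fz: "bounded_borel_on f\<^sub>z K1"
    unfolding f\<^sub>z_def by (intro bounded_borel_on_mult f bounded_borel_on_continuous A.compact continuous_intros)
  have F: "bounded_borel_on F K2"
    unfolding F_def by (rule A.bounded_borel_on_cauchy_tr[OF f B.compact]) (use disj in blast)
  have Fz: "bounded_borel_on (\<lambda>y. F y * (z - complex_of_real y) * g y) K2"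
    by (intro bounded_borel_on_mult F g bounded_borel_on_continuous B.compact continuous_intros)
  have "sigma_integral M1 e1 (\<lambda>x. f x * (z - complex_of_real x) * cauchy_tr M2 e2 g (complex_of_real x))
      = - sigma_integral M2 e2 (\<lambda>y. g y * cauchy_tr M1 e1 f\<^sub>z (complex_of_real y))"
    unfolding f\<^sub>z_def[symmetric] by (rule sigma_integral_mult_cauchy_tr_swap[OF A B disj fz g])
  also have "sigma_integral M2 e2 (\<lambda>y. g y * cauchy_tr M1 e1 f\<^sub>z (complex_of_real y))
      = sigma_integral M2 e2 (\<lambda>y. F y * (z - complex_of_real y) * g y + sigma_integral M1 e1 f * g y)"
  proof (rule B.sigma_integral_cong)
    show "(\<lambda>y. g y * cauchy_tr M1 e1 f\<^sub>z (complex_of_real y)) \<in> borel_measurable borel"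
      using bounded_borel_on_measurable[OF g] A.borel_measurable_cauchy_tr[OF bounded_borel_on_measurable[OF fz]]
      by measurable
    show "(\<lambda>y. F y * (z - complex_of_real y) * g y + sigma_integral M1 e1 f * g y) \<in> borel_measurable borel"
      using bounded_borel_on_measurable[OF Fz] bounded_borel_on_measurable[OF g] by measurable
    fix y assume "y \<in> K2"
    then have "y \<notin> K1" using disj by auto
    then show "g y * cauchy_tr M1 e1 f\<^sub>z (complex_of_real y)
        = F y * (z - complex_of_real y) * g y + sigma_integral M1 e1 f * g y"
      unfolding f\<^sub>z_def F_def A.cauchy_tr_mult_diff[OF f \<open>y \<notin> K1\<close>] by (simp add: algebra_simps)
  qed
  also have "\<dots> = sigma_integral M2 e2 (\<lambda>y. F y * (z - complex_of_real y) * g y)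
      + sigma_integral M1 e1 f * sigma_integral M2 e2 g"
    by (simp only: B.sigma_integral_add[OF Fz bounded_borel_on_mult[OF bounded_borel_on_const g]]
        sigma_integral_cmult)
  finally show ?thesis by (simp add: F_def)
qed

section \<open>Iterated Cauchy transforms of a Nikishin system\<close>

(*
  ascending_transform M eps p f d transforms f successively with respect to
  sigma_p, ..., sigma_(p+d-1) and is considered on Delta_(p+d); for f = 1 and d > 0 it is the
  Cauchy transform of s_(p+d-1,p). Dually, descending_transform M eps q g d uses
  sigma_q, ..., sigma_(q-d+1), lives on Delta_(q-d), and for g = 1 gives the transform of s_(q-d+1,q).
*)

primrec ascending_transform ::
  "(nat \<Rightarrow> real measure) \<Rightarrow> (nat \<Rightarrow> real) \<Rightarrow> nat \<Rightarrow> (real \<Rightarrow> complex) \<Rightarrow> nat \<Rightarrow> real \<Rightarrow> complex" where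
  "ascending_transform M eps p f 0 = f"
| "ascending_transform M eps p f (Suc d) =
     (\<lambda>y. cauchy_tr (M (p + d)) (eps (p + d)) (ascending_transform M eps p f d) (complex_of_real y))"

primrec descending_transform ::
  "(nat \<Rightarrow> real measure) \<Rightarrow> (nat \<Rightarrow> real) \<Rightarrow> nat \<Rightarrow> (real \<Rightarrow> complex) \<Rightarrow> nat \<Rightarrow> real \<Rightarrow> complex" where
  "descending_transform M eps q g 0 = g"
| "descending_transform M eps q g (Suc d) =
     (\<lambda>x. cauchy_tr (M (q - d)) (eps (q - d)) (descending_transform M eps q g d) (complex_of_real x))"

lemma ascending_transform_Suc_shift:
  "ascending_transform M eps p f (Suc d) = ascending_transform M eps (Suc p) (ascending_transform M eps p f 1) d"
  by (induction d) simp_all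

lemma Psi_eq_ascending_transform:
  "(\<lambda>x. Psi M eps Q k (complex_of_real x)) = ascending_transform M eps 1 (\<lambda>x. poly Q (complex_of_real x)) k"
  by (induction k) simp_all

lemma Psi_Suc_eq_cauchy_tr:
  "Psi M eps Q (Suc k) z
     = cauchy_tr (M (Suc k)) (eps (Suc k)) (ascending_transform M eps 1 (\<lambda>x. poly Q (complex_of_real x)) k) z"
  by (simp only: Psi.simps Psi_eq_ascending_transform)

lemma nik_up_eq_cauchy_tr:
  "nik_up M eps j d z = cauchy_tr (M j) (eps j) (descending_transform M eps (j + d) (\<lambda>_. 1) d) z"
proof (induction d arbitrary: j z)
  case (Suc d)
  have "descending_transform M eps (j + Suc d) (\<lambda>_. 1) (Suc d)
      = (\<lambda>x. nik_up M eps (Suc j) d (complex_of_real x))"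
    by (simp add: Suc.IH)
  then show ?case by simp
qed simp

lemma nik_down_eq_cauchy_tr:
  "d \<le> j \<Longrightarrow> nik_down M eps j d z = cauchy_tr (M j) (eps j) (ascending_transform M eps (j - d) (\<lambda>_. 1) d) z"
proof (induction d arbitrary: j z)
  case (Suc d)
  then have "ascending_transform M eps (j - Suc d) (\<lambda>_. 1) (Suc d)
      = (\<lambda>x. nik_down M eps (j - 1) d (complex_of_real x))"
    by (simp add: Suc.IH Suc_diff_Suc[symmetric])
  then show ?case by simp
qed simp

lemma s_hat_eq_descending:
  "k \<le> j \<Longrightarrow> s_hat M eps k j z = cauchy_tr (M k) (eps k) (descending_transform M eps j (\<lambda>_. 1) (j - k)) z"
  by (simp add: s_hat_def nik_up_eq_cauchy_tr)

lemma s_hat_eq_ascending: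
  "k \<le> j \<Longrightarrow> s_hat M eps j k z = cauchy_tr (M j) (eps j) (ascending_transform M eps k (\<lambda>_. 1) (j - k)) z"
  by (cases "j = k") (simp_all add: s_hat_def nik_up_eq_cauchy_tr nik_down_eq_cauchy_tr)

locale nikishin_system =
  fixes m :: nat and M :: "nat \<Rightarrow> real measure" and eps :: "nat \<Rightarrow> real" and a b :: "nat \<Rightarrow> real"
  assumes in_class: "\<And>j. j \<in> {1..m} \<Longrightarrow> in_class_M (M j) (eps j) (a j) (b j)"
    and disjoint: "\<And>j. j \<in> {1..<m} \<Longrightarrow> {a j..b j} \<inter> {a (Suc j)..b (Suc j)} = {}"
begin

abbreviation \<Delta> :: "nat \<Rightarrow> real set" where "\<Delta> j \<equiv> {a j..b j}"

lemma concentrated: "1 \<le> j \<Longrightarrow> j \<le> m \<Longrightarrow> concentrated_measure (M j) (\<Delta> j)"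
  using in_class[of j] by (intro in_class_M_concentrated) simp

lemma bounded_borel_on_transform_Suc:
  assumes "1 \<le> j" "Suc j \<le> m" "bounded_borel_on h (\<Delta> j)"
  shows "bounded_borel_on (\<lambda>y. cauchy_tr (M j) (eps j) h (complex_of_real y)) (\<Delta> (Suc j))"
  using assms disjoint[of j]
  by (intro concentrated_measure.bounded_borel_on_cauchy_tr[OF concentrated]) auto

lemma bounded_borel_on_transform_pred:
  assumes "1 \<le> j" "Suc j \<le> m" "bounded_borel_on h (\<Delta> (Suc j))"
  shows "bounded_borel_on (\<lambda>x. cauchy_tr (M (Suc j)) (eps (Suc j)) h (complex_of_real x)) (\<Delta> j)"
  using assms disjoint[of j]
  by (intro concentrated_measure.bounded_borel_on_cauchy_tr[OF concentrated]) auto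

lemma bounded_borel_on_ascending:
  assumes "1 \<le> p" "p + d \<le> m" "bounded_borel_on f (\<Delta> p)"
  shows "bounded_borel_on (ascending_transform M eps p f d) (\<Delta> (p + d))"
  using assms(2)
proof (induction d)
  case (Suc d)
  then show ?case
    using bounded_borel_on_transform_Suc[of "p + d" "ascending_transform M eps p f d"] assms(1) by simp
qed (simp add: assms(3))

lemma bounded_borel_on_descending:
  assumes "q \<le> m" "d < q" "bounded_borel_on g (\<Delta> q)"
  shows "bounded_borel_on (descending_transform M eps q g d) (\<Delta> (q - d))"
  using assms(2)
proof (induction d)
  case (Suc d)
  then have "bounded_borel_on (\<lambda>x. cauchy_tr (M (Suc (q - Suc d))) (eps (Suc (q - Suc d)))
      (descending_transform M eps q g d) (complex_of_real x)) (\<Delta> (q - Suc d))"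
    using assms(1) by (intro bounded_borel_on_transform_pred) (simp_all add: Suc_diff_Suc)
  then show ?case using Suc.prems by (simp add: Suc_diff_Suc)
qed (simp add: assms(3))

lemma sigma_integral_transform_chain_offset:
  assumes "1 \<le> p" "p + d \<le> m" "bounded_borel_on f (\<Delta> p)" "bounded_borel_on g (\<Delta> (p + d))"
  shows "sigma_integral (M p) (eps p) (\<lambda>x. f x * descending_transform M eps (p + d) g d x)
       = (-1) ^ d * sigma_integral (M (p + d)) (eps (p + d)) (\<lambda>x. ascending_transform M eps p f d x * g x)"
  using assms
proof (induction d arbitrary: p f)
  case 0
  then show ?case by (simp add: mult.commute)
next
  case (Suc d)
  define f' where "f' = ascending_transform M eps p f 1"
  have f': "bounded_borel_on f' (\<Delta> (Suc p))"
    unfolding f'_def using Suc.prems bounded_borel_on_ascending[of p 1 f] by simp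
  have G: "bounded_borel_on (descending_transform M eps (Suc p + d) g d) (\<Delta> (Suc p))"
    using bounded_borel_on_descending[of "Suc p + d" d g] Suc.prems by simp
  have "sigma_integral (M p) (eps p) (\<lambda>x. f x * descending_transform M eps (p + Suc d) g (Suc d) x)
      = sigma_integral (M p) (eps p) (\<lambda>x. f x * cauchy_tr (M (Suc p)) (eps (Suc p))
          (descending_transform M eps (Suc p + d) g d) (complex_of_real x))"
    by simp
  also have "\<dots> = - sigma_integral (M (Suc p)) (eps (Suc p))
      (\<lambda>y. f' y * descending_transform M eps (Suc p + d) g d y)"
    using Suc.prems disjoint[of p] unfolding f'_def
    by (subst sigma_integral_mult_cauchy_tr_swap[OF concentrated concentrated _ _ G])
      (simp_all add: mult.commute)
  also have "\<dots> = - ((-1) ^ d * sigma_integral (M (p + Suc d)) (eps (p + Suc d))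
      (\<lambda>x. ascending_transform M eps (Suc p) f' d x * g x))"
    using Suc.IH[of "Suc p" f'] Suc.prems f' by simp
  finally show ?case
    unfolding f'_def ascending_transform_Suc_shift by simp
qed

lemma sigma_integral_transform_chain:
  assumes "1 \<le> p" "p \<le> q" "q \<le> m" "bounded_borel_on f (\<Delta> p)" "bounded_borel_on g (\<Delta> q)"
  shows "sigma_integral (M p) (eps p) (\<lambda>x. f x * descending_transform M eps q g (q - p) x)
       = (-1) ^ (p + q) * sigma_integral (M q) (eps q) (\<lambda>x. ascending_transform M eps p f (q - p) x * g x)"
proof -
  obtain d where q: "q = p + d" using assms(2) le_Suc_ex by blast
  have "(-1) ^ (p + q) = ((-1) ^ d :: complex)"
    unfolding q by (simp add: power_add)
  then show ?thesis
    using sigma_integral_transform_chain_offset[of p d f g] assms unfolding q by simp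
qed

lemma bounded_borel_on_Psi:
  "k < m \<Longrightarrow> bounded_borel_on (\<lambda>x. Psi M eps Q k (complex_of_real x)) (\<Delta> (Suc k))"
  using bounded_borel_on_ascending[of 1 k "\<lambda>x. poly Q (complex_of_real x)"]
  by (simp add: Psi_eq_ascending_transform bounded_borel_on_poly)

lemma bounded_borel_on_s_density:
  "1 \<le> i \<Longrightarrow> i \<le> j \<Longrightarrow> j \<le> m \<Longrightarrow>
     bounded_borel_on (descending_transform M eps j (\<lambda>_. 1) (j - i)) (\<Delta> i)"
  using bounded_borel_on_descending[of j "j - i" "\<lambda>_. 1"] by (simp add: bounded_borel_on_const)

(* The Cauchy transform of h ds_(i,j), where ds_(i,j) = s_(i+1,j) dsigma_i for i < j. *)

definition s_cauchy_tr :: "(real \<Rightarrow> complex) \<Rightarrow> nat \<Rightarrow> nat \<Rightarrow> complex \<Rightarrow> complex" where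
  "s_cauchy_tr h i j z =
     cauchy_tr (M i) (eps i) (\<lambda>x. h x * descending_transform M eps j (\<lambda>_. 1) (j - i) x) z"

lemma s_hat_eq_s_cauchy_tr: "i \<le> j \<Longrightarrow> s_hat M eps i j z = s_cauchy_tr (\<lambda>_. 1) i j z"
  by (simp add: s_cauchy_tr_def s_hat_eq_descending)

lemma remainder_eq_s_cauchy_tr:
  assumes "1 \<le> j" "j \<le> m" and z: "z \<notin> complex_of_real ` \<Delta> 1"
    and "((\<lambda>z. poly Q z * s_hat M eps 1 j z - poly P z) \<longlongrightarrow> 0) at_infinity"
  shows "poly Q z * s_hat M eps 1 j z - poly P z = s_cauchy_tr (\<lambda>x. poly Q (complex_of_real x)) 1 j z"
  using concentrated_measure.cauchy_tr_remainder[OF concentrated bounded_borel_on_s_density _ z] assms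
  by (simp add: s_hat_eq_s_cauchy_tr s_cauchy_tr_def)

lemma s_cauchy_tr_Psi_step:
  assumes i: "1 \<le> i" "i < j" "j \<le> m"
    and z: "z \<notin> complex_of_real ` \<Delta> i" "z \<notin> complex_of_real ` \<Delta> (Suc i)"
  shows "s_cauchy_tr (\<lambda>x. Psi M eps Q (i - 1) (complex_of_real x)) i j z
       = Psi M eps Q i z * s_hat M eps (Suc i) j z
         - s_cauchy_tr (\<lambda>x. Psi M eps Q i (complex_of_real x)) (Suc i) j z"
proof -
  define f where "f = (\<lambda>x. Psi M eps Q (i - 1) (complex_of_real x))"
  define g where "g = descending_transform M eps j (\<lambda>_. 1) (j - Suc i)"
  have f: "bounded_borel_on f (\<Delta> i)"
    using bounded_borel_on_Psi[of "i - 1" Q] i by (simp add: f_def)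
  have g: "bounded_borel_on g (\<Delta> (Suc i))"
    using bounded_borel_on_s_density[of "Suc i" j] i by (simp add: g_def)
  have Psi_i: "cauchy_tr (M i) (eps i) f w = Psi M eps Q i w" for w
    using i by (cases i) (simp_all add: f_def)
  have "j - i = Suc (j - Suc i)" "j - (j - Suc i) = Suc i" using i by auto
  then have g_transform: "descending_transform M eps j (\<lambda>_. 1) (j - i)
      = (\<lambda>x. cauchy_tr (M (Suc i)) (eps (Suc i)) g (complex_of_real x))"
    by (simp add: g_def)
  have "cauchy_tr (M i) (eps i) (\<lambda>x. f x * cauchy_tr (M (Suc i)) (eps (Suc i)) g (complex_of_real x)) z
      = cauchy_tr (M i) (eps i) f z * cauchy_tr (M (Suc i)) (eps (Suc i)) g z
        - cauchy_tr (M (Suc i)) (eps (Suc i)) (\<lambda>y. g y * cauchy_tr (M i) (eps i) f (complex_of_real y)) z"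
    using i z disjoint[of i] by (intro cauchy_tr_mult_cauchy_tr[OF concentrated concentrated _ f g]) auto
  then show ?thesis
    unfolding s_cauchy_tr_def g_transform Psi_i using i
    by (simp add: s_hat_eq_descending g_def f_def mult.commute)
qed

lemma s_cauchy_tr_poly_eq_sum_Psi:
  assumes j: "1 \<le> j" "j \<le> m" and z: "\<And>k. k \<in> {1..j} \<Longrightarrow> z \<notin> complex_of_real ` \<Delta> k"
  shows "s_cauchy_tr (\<lambda>x. poly Q (complex_of_real x)) 1 j z
     = (\<Sum>k=2..j. (-1) ^ k * s_hat M eps k j z * Psi M eps Q (k - 1) z) + (-1) ^ (j + 1) * Psi M eps Q j z"
proof -
  define T where "T i = s_cauchy_tr (\<lambda>x. Psi M eps Q (i - 1) (complex_of_real x)) i j z" for i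
  define c where "c k = s_hat M eps k j z * Psi M eps Q (k - 1) z" for k
  have "T i = c (Suc i) - T (Suc i)" if "1 \<le> i" "i < j" for i
    using s_cauchy_tr_Psi_step[of i j z Q] z[of i] z[of "Suc i"] that j by (simp add: T_def c_def mult.commute)
  moreover have "T j = Psi M eps Q j z"
    using j by (cases j) (simp_all add: T_def s_cauchy_tr_def Psi_Suc_eq_cauchy_tr Psi_eq_ascending_transform)
  ultimately show ?thesis
    using alternating_telescope[of 1 j T c] j by (simp add: T_def c_def algebra_simps numeral_2_eq_2)
qed

definition ascending_resolvent :: "complex poly \<Rightarrow> complex \<Rightarrow> nat \<Rightarrow> real \<Rightarrow> complex" where
  "ascending_resolvent Q z =
     ascending_transform M eps 1 (\<lambda>x. poly Q (complex_of_real x) / (z - complex_of_real x))"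

definition descending_resolvent :: "nat \<Rightarrow> complex \<Rightarrow> nat \<Rightarrow> real \<Rightarrow> complex" where
  "descending_resolvent j z = descending_transform M eps j (\<lambda>x. 1 / (z - complex_of_real x))"

definition resolvent_pairing :: "complex poly \<Rightarrow> nat \<Rightarrow> complex \<Rightarrow> nat \<Rightarrow> complex" where
  "resolvent_pairing Q j z i = sigma_integral (M i) (eps i) (\<lambda>x.
     ascending_resolvent Q z (i - 1) x * (z - complex_of_real x) * descending_resolvent j z (j - i) x)"

lemma bounded_borel_on_poly_resolvent:
  "z \<notin> complex_of_real ` \<Delta> 1 \<Longrightarrow>
     bounded_borel_on (\<lambda>x. poly Q (complex_of_real x) / (z - complex_of_real x)) (\<Delta> 1)"
  by (intro bounded_borel_on_divide_diff bounded_borel_on_poly compact_Icc)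

lemma bounded_borel_on_ascending_resolvent:
  "1 \<le> i \<Longrightarrow> i \<le> m \<Longrightarrow> z \<notin> complex_of_real ` \<Delta> 1 \<Longrightarrow>
     bounded_borel_on (ascending_resolvent Q z (i - 1)) (\<Delta> i)"
  using bounded_borel_on_ascending[OF _ _ bounded_borel_on_poly_resolvent, where d = "i - 1"]
  by (simp add: ascending_resolvent_def)

lemma bounded_borel_on_descending_resolvent:
  "1 \<le> i \<Longrightarrow> i \<le> j \<Longrightarrow> j \<le> m \<Longrightarrow> z \<notin> complex_of_real ` \<Delta> j \<Longrightarrow>
     bounded_borel_on (descending_resolvent j z (j - i)) (\<Delta> i)"
  using bounded_borel_on_descending[of j "j - i"]
  by (simp add: descending_resolvent_def bounded_borel_on_inverse_diff)

lemma sigma_integral_ascending_resolvent: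
  assumes "1 \<le> i" "i \<le> m" "z \<notin> complex_of_real ` \<Delta> 1"
  shows "sigma_integral (M i) (eps i) (ascending_resolvent Q z (i - 1))
       = (-1) ^ (i + 1) * s_cauchy_tr (\<lambda>x. poly Q (complex_of_real x)) 1 i z"
  using sigma_integral_transform_chain[OF _ _ _ bounded_borel_on_poly_resolvent bounded_borel_on_const[of 1], of i] assms
  by (simp add: ascending_resolvent_def s_cauchy_tr_def cauchy_tr_eq_sigma_integral minus_one_power_mult_eq_iff)

lemma sigma_integral_descending_resolvent:
  assumes "1 \<le> k" "k \<le> j" "j \<le> m" "z \<notin> complex_of_real ` \<Delta> j"
  shows "sigma_integral (M k) (eps k) (descending_resolvent j z (j - k)) = (-1) ^ (k + j) * s_hat M eps j k z"
  using sigma_integral_transform_chain[OF _ _ _ bounded_borel_on_const[of 1]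
      bounded_borel_on_inverse_diff[OF compact_Icc assms(4)], of k] assms
  by (simp add: descending_resolvent_def s_hat_eq_ascending cauchy_tr_eq_sigma_integral)

lemma resolvent_pairing_first:
  assumes j: "1 \<le> j" "j \<le> m" and z: "z \<notin> complex_of_real ` \<Delta> 1" "z \<notin> complex_of_real ` \<Delta> j"
  shows "resolvent_pairing Q j z 1 = (-1) ^ (j + 1) * Psi M eps Q j z"
proof -
  have R: "bounded_borel_on (descending_resolvent j z (j - 1)) (\<Delta> 1)"
    using bounded_borel_on_descending_resolvent[of 1 j z] j z by simp
  have "resolvent_pairing Q j z 1
      = sigma_integral (M 1) (eps 1) (\<lambda>x. poly Q (complex_of_real x) * descending_resolvent j z (j - 1) x)"
    unfolding resolvent_pairing_def
  proof (rule concentrated_measure.sigma_integral_cong[OF concentrated])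
    show "(\<lambda>x. ascending_resolvent Q z (1 - 1) x * (z - complex_of_real x) * descending_resolvent j z (j - 1) x)
        \<in> borel_measurable borel"
      using bounded_borel_on_measurable[OF R] by (simp add: ascending_resolvent_def) measurable
    show "(\<lambda>x. poly Q (complex_of_real x) * descending_resolvent j z (j - 1) x) \<in> borel_measurable borel"
      using bounded_borel_on_measurable[OF R] by measurable
    fix x assume "x \<in> \<Delta> 1"
    then have "z - complex_of_real x \<noteq> 0" using z by auto
    then show "ascending_resolvent Q z (1 - 1) x * (z - complex_of_real x) * descending_resolvent j z (j - 1) x
        = poly Q (complex_of_real x) * descending_resolvent j z (j - 1) x"
      by (simp add: ascending_resolvent_def)
  qed (use j in auto)
  also have "\<dots> = (-1) ^ (j + 1) * Psi M eps Q j z"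
    using sigma_integral_transform_chain[OF _ _ _ bounded_borel_on_poly[of "\<Delta> 1" Q]
        bounded_borel_on_inverse_diff[OF compact_Icc z(2)]] j
    by (cases j) (simp_all add: descending_resolvent_def Psi_Suc_eq_cauchy_tr cauchy_tr_eq_sigma_integral del: Psi.simps)
  finally show ?thesis .
qed

lemma resolvent_pairing_last:
  assumes j: "1 \<le> j" "j \<le> m" and z: "z \<notin> complex_of_real ` \<Delta> 1" "z \<notin> complex_of_real ` \<Delta> j"
  shows "resolvent_pairing Q j z j = (-1) ^ (j + 1) * s_cauchy_tr (\<lambda>x. poly Q (complex_of_real x)) 1 j z"
proof -
  have L: "bounded_borel_on (ascending_resolvent Q z (j - 1)) (\<Delta> j)"
    using bounded_borel_on_ascending_resolvent j z by simp
  have "resolvent_pairing Q j z j = sigma_integral (M j) (eps j) (ascending_resolvent Q z (j - 1))"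
    unfolding resolvent_pairing_def
  proof (rule concentrated_measure.sigma_integral_cong[OF concentrated])
    show "(\<lambda>x. ascending_resolvent Q z (j - 1) x * (z - complex_of_real x) * descending_resolvent j z (j - j) x)
        \<in> borel_measurable borel"
      using bounded_borel_on_measurable[OF L] by (simp add: descending_resolvent_def) measurable
    show "ascending_resolvent Q z (j - 1) \<in> borel_measurable borel"
      using bounded_borel_on_measurable[OF L] .
    fix x assume "x \<in> \<Delta> j"
    then have "z - complex_of_real x \<noteq> 0" using z by auto
    then show "ascending_resolvent Q z (j - 1) x * (z - complex_of_real x) * descending_resolvent j z (j - j) x
        = ascending_resolvent Q z (j - 1) x"
      by (simp add: descending_resolvent_def)
  qed (use j in auto)
  then show ?thesis
    using sigma_integral_ascending_resolvent[OF j z(1)] by simp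
qed

lemma resolvent_pairing_step:
  assumes i: "1 \<le> i" "i < j" "j \<le> m" and z: "z \<notin> complex_of_real ` \<Delta> 1" "z \<notin> complex_of_real ` \<Delta> j"
  shows "resolvent_pairing Q j z i
       = (-1) ^ (j + 1) * s_hat M eps j (Suc i) z * s_cauchy_tr (\<lambda>x. poly Q (complex_of_real x)) 1 i z
         - resolvent_pairing Q j z (Suc i)"
proof -
  define L where "L = ascending_resolvent Q z"
  define R where "R = descending_resolvent j z"
  have "j - i = Suc (j - Suc i)" "j - (j - Suc i) = Suc i" using i by auto
  then have R_transform: "R (j - i) = (\<lambda>x. cauchy_tr (M (Suc i)) (eps (Suc i)) (R (j - Suc i)) (complex_of_real x))"
    by (simp add: R_def descending_resolvent_def)
  have L_transform: "L i = (\<lambda>y. cauchy_tr (M i) (eps i) (L (i - 1)) (complex_of_real y))"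
    using i by (cases i) (simp_all add: L_def ascending_resolvent_def)
  have f: "bounded_borel_on (L (i - 1)) (\<Delta> i)" and g: "bounded_borel_on (R (j - Suc i)) (\<Delta> (Suc i))"
    and disj: "\<Delta> i \<inter> \<Delta> (Suc i) = {}"
    using i z disjoint[of i] bounded_borel_on_ascending_resolvent[of i z Q]
      bounded_borel_on_descending_resolvent[of "Suc i" j z] by (auto simp: L_def R_def)
  have "resolvent_pairing Q j z i = - (sigma_integral (M i) (eps i) (L (i - 1))
      * sigma_integral (M (Suc i)) (eps (Suc i)) (R (j - Suc i))) - resolvent_pairing Q j z (Suc i)"
    unfolding resolvent_pairing_def L_def[symmetric] R_def[symmetric] diff_Suc_1 R_transform L_transform
    using i by (intro sigma_integral_linear_mult_cauchy_tr[OF concentrated concentrated disj f g]) auto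
  then show ?thesis
    using sigma_integral_ascending_resolvent[of i z Q] sigma_integral_descending_resolvent[of "Suc i" j z] i z
    by (simp add: L_def R_def power_add mult_ac)
qed

lemma Psi_eq_sum_s_cauchy_tr_poly:
  assumes j: "1 \<le> j" "j \<le> m" and z: "z \<notin> complex_of_real ` \<Delta> 1" "z \<notin> complex_of_real ` \<Delta> j"
  shows "Psi M eps Q j z
     = (\<Sum>k=2..j. (-1) ^ k * s_hat M eps j k z * s_cauchy_tr (\<lambda>x. poly Q (complex_of_real x)) 1 (k - 1) z)
       + (-1) ^ (j + 1) * s_cauchy_tr (\<lambda>x. poly Q (complex_of_real x)) 1 j z"
proof -
  define \<Phi> where "\<Phi> k = s_cauchy_tr (\<lambda>x. poly Q (complex_of_real x)) 1 k z" for k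
  define c where "c k = (-1) ^ (j + 1) * s_hat M eps j k z * \<Phi> (k - 1)" for k
  have "(-1) ^ j * Psi M eps Q j z = (-1) ^ j * (-1) ^ (j + 1) * \<Phi> j - (\<Sum>k=2..j. (-1) ^ k * c k)"
    using alternating_telescope[of 1 j "resolvent_pairing Q j z" c] j
      resolvent_pairing_step[OF _ _ _ z] resolvent_pairing_first[OF j z] resolvent_pairing_last[OF j z]
    by (simp add: \<Phi>_def c_def numeral_2_eq_2 mult_ac)
  also have "\<dots> = (-1) ^ j * ((\<Sum>k=2..j. (-1) ^ k * s_hat M eps j k z * \<Phi> (k - 1)) + (-1) ^ (j + 1) * \<Phi> j)"
    by (simp add: c_def sum_distrib_left sum_negf algebra_simps)
  finally show ?thesis by (simp add: \<Phi>_def)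
qed

end

theorem lemma7:
  fixes m :: nat
    and M :: "nat \<Rightarrow> real measure" and eps :: "nat \<Rightarrow> real"
    and a b :: "nat \<Rightarrow> real"
    and n :: "nat \<Rightarrow> nat"
    and Q :: "complex poly" and P :: "nat \<Rightarrow> complex poly"
  assumes m_pos: "m \<ge> 1"
    and intervals: "\<And>j. j \<in> {1..m} \<Longrightarrow> a j < b j"
    and meas: "\<And>j. j \<in> {1..m} \<Longrightarrow> in_class_M (M j) (eps j) (a j) (b j)"
    and disj: "\<And>j. j \<in> {1..<m} \<Longrightarrow> {a j..b j} \<inter> {a (Suc j)..b (Suc j)} = {}"
    and Q_nz: "Q \<noteq> 0"
    and Q_deg: "degree Q \<le> (\<Sum>j=1..m. n j)"
    and HP: "\<And>j. j \<in> {1..m} \<Longrightarrow>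
       (\<lambda>z. poly Q z * s_hat M eps 1 j z - poly (P j) z)
         \<in> O[at_infinity](\<lambda>z. 1 / z ^ (n j + 1))"
  defines "Phi \<equiv> (\<lambda>j z. poly Q z * s_hat M eps 1 j z - poly (P j) z)"
    and "Delta \<equiv> (\<lambda>j. complex_of_real ` {a j..b j})"
  shows "(\<forall>z. z \<notin> Delta 1 \<longrightarrow> Psi M eps Q 1 z = Phi 1 z)
    \<and> (\<forall>j\<in>{2..m}. \<forall>z. z \<notin> Delta 1 \<union> Delta j \<longrightarrow>
          Psi M eps Q j z =
            (\<Sum>k=2..j. (-1) ^ k * s_hat M eps j k z * Phi (k - 1) z)
            + (-1) ^ (j + 1) * Phi j z)
    \<and> (\<forall>j\<in>{2..m}. \<forall>z. z \<notin> (\<Union>k\<in>{1..j}. Delta k) \<longrightarrow>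
          Phi j z =
            (\<Sum>k=2..j. (-1) ^ k * s_hat M eps k j z * Psi M eps Q (k - 1) z)
            + (-1) ^ (j + 1) * Psi M eps Q j z)"
proof -
  (* The identities hold for every Q satisfying the interpolation conditions at infinity. *)
  interpret nikishin_system m M eps a b
    using meas disj by unfold_locales
  have Phi_eq: "Phi j z = s_cauchy_tr (\<lambda>x. poly Q (complex_of_real x)) 1 j z"
    if j: "1 \<le> j" "j \<le> m" and z: "z \<notin> Delta 1" for j z
  proof -
    have "(Phi j \<longlongrightarrow> 0) at_infinity"
      using bigo_tendsto_0[OF HP inverse_power_tendsto_0] j unfolding Phi_def by simp
    then show ?thesis
      using remainder_eq_s_cauchy_tr[OF j] z unfolding Phi_def Delta_def by simp
  qed
  have Phi_eq_sum: "Phi j z = (\<Sum>k=2..j. (-1) ^ k * s_hat M eps k j z * Psi M eps Q (k - 1) z)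
      + (-1) ^ (j + 1) * Psi M eps Q j z"
    if "1 \<le> j" "j \<le> m" "z \<notin> (\<Union>k\<in>{1..j}. Delta k)" for j z
    using that s_cauchy_tr_poly_eq_sum_Psi[of j z Q] Phi_eq[of j z] unfolding Delta_def by simp
  have Psi_eq_sum: "Psi M eps Q j z = (\<Sum>k=2..j. (-1) ^ k * s_hat M eps j k z * Phi (k - 1) z)
      + (-1) ^ (j + 1) * Phi j z"
    if j: "2 \<le> j" "j \<le> m" and z: "z \<notin> Delta 1 \<union> Delta j" for j z
  proof -
    have "Phi (k - 1) z = s_cauchy_tr (\<lambda>x. poly Q (complex_of_real x)) 1 (k - 1) z" if "k \<in> {2..j}" for k
      using that j z by (intro Phi_eq) auto
    then show ?thesis
      using j z Psi_eq_sum_s_cauchy_tr_poly[of j z Q] Phi_eq[of j z] unfolding Delta_def by simp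
  qed
  have Psi_1_eq: "Psi M eps Q 1 z = Phi 1 z" if "z \<notin> Delta 1" for z
    using Phi_eq_sum[of 1 z] that m_pos by simp
  show ?thesis
    by (intro conjI ballI allI impI Psi_1_eq Psi_eq_sum Phi_eq_sum) auto
qed

end
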